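(* Let $T$ be a tree on $N>2$ vertices with $M\ge 2$ leaves. Then $$R^+(T)\ge N(N-2)+2(N-1)\left[M+\frac{(N-M)^2}{2(N-1)-M}\right]-2(N-1).$$
   Context: For vertices $i,j$ of a connected graph $G$, $R_{ij}$ denotes the effective resistance between $i$ and $j$ when every edge is a unit resistor. The additive degree-Kirchhoff index is $R^+(G)=\sum_{i<j}(d_i+d_j)R_{ij}$, where $d_i$ is the degree of vertex $i$. *)

theory Defs
  imports Complex_Main
begin

definition simple_graph :: "'a set \<Rightarrow> ('a \<Rightarrow> 'a \<Rightarrow> bool) \<Rightarrow> bool" where
  "simple_graph V E \<longleftrightarrow> finite V \<and> (\<forall>x y. E x y \<longrightarrow> x \<in> V \<and> y \<in> V)
     \<and> (\<forall>x y. E x y \<longrightarrow> E y x) \<and> (\<forall>x. \<not> E x x)"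

definition connected_graph :: "'a set \<Rightarrow> ('a \<Rightarrow> 'a \<Rightarrow> bool) \<Rightarrow> bool" where
  "connected_graph V E \<longleftrightarrow> V \<noteq> {} \<and> (\<forall>x\<in>V. \<forall>y\<in>V. E\<^sup>*\<^sup>* x y)"

definition is_cycle :: "('a \<Rightarrow> 'a \<Rightarrow> bool) \<Rightarrow> 'a list \<Rightarrow> bool" where
  "is_cycle E cs \<longleftrightarrow> length cs \<ge> 3 \<and> distinct cs
     \<and> (\<forall>i. Suc i < length cs \<longrightarrow> E (cs ! i) (cs ! Suc i))
     \<and> E (last cs) (hd cs)"

definition is_tree :: "'a set \<Rightarrow> ('a \<Rightarrow> 'a \<Rightarrow> bool) \<Rightarrow> bool" where
  "is_tree V E \<longleftrightarrow> simple_graph V E \<and> connected_graph V E \<and> (\<nexists>cs. is_cycle E cs)"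

definition degree :: "'a set \<Rightarrow> ('a \<Rightarrow> 'a \<Rightarrow> bool) \<Rightarrow> 'a \<Rightarrow> nat" where
  "degree V E x = card {y\<in>V. E x y}"

definition leaves :: "'a set \<Rightarrow> ('a \<Rightarrow> 'a \<Rightarrow> bool) \<Rightarrow> 'a set" where
  "leaves V E = {x\<in>V. degree V E x = 1}"

text \<open>Effective resistance between i and j with unit resistors: inject a unit current
  at i and extract it at j; by Kirchhoff's laws the node potentials v satisfy
  \<open>\<Sum>_{l ~ k} (v k - v l) = [k=i] - [k=j]\<close> for all vertices k, and
  \<open>R_ij = v i - v j\<close> (independent of the choice of v in a connected graph).\<close>
definition eff_resistance :: "'a set \<Rightarrow> ('a \<Rightarrow> 'a \<Rightarrow> bool) \<Rightarrow> 'a \<Rightarrow> 'a \<Rightarrow> real" where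
  "eff_resistance V E i j = (THE r. \<exists>v :: 'a \<Rightarrow> real.
      (\<forall>k\<in>V. (\<Sum>l\<in>{l\<in>V. E k l}. v k - v l)
               = (if k = i then 1 else 0) - (if k = j then 1 else 0))
      \<and> r = v i - v j)"

definition additive_degree_kirchhoff :: "('a::linorder) set \<Rightarrow> ('a \<Rightarrow> 'a \<Rightarrow> bool) \<Rightarrow> real" where
  "additive_degree_kirchhoff V E =
     (\<Sum>(i,j)\<in>{(i,j). i \<in> V \<and> j \<in> V \<and> i < j}.
        real (degree V E i + degree V E j) * eff_resistance V E i j)"

end

theory Submission
  imports Defs
begin

text \<open>In a tree the effective resistance is the graph distance; all that is needed is
  \<open>R_ij \<ge> 1\<close> for adjacent and \<open>R_ij \<ge> 2\<close> for non-adjacent vertices. Both bounds come with an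
  explicit potential, built by removing a leaf and extending a potential of the smaller tree.
  Replacing \<open>R_ij\<close> by these bounds and using \<open>\<Sum> d_i = 2(N - 1)\<close> together with
  \<open>d_i + d_j \<le> N\<close> for adjacent vertices (they have no common neighbour) gives
  \<open>R\<^sup>+(T) \<ge> (3N - 4)(N - 1)\<close>, the value attained by the star. As a tree with \<open>N > 2\<close>
  vertices has at most \<open>N - 1\<close> leaves, the bound in terms of \<open>M\<close> never exceeds \<open>(3N - 4)(N - 1)\<close>.\<close>

section \<open>Trees and leaf removal\<close>

lemma simple_graphD:
  assumes "simple_graph V E"
  shows "finite V" and "E x y \<Longrightarrow> x \<in> V" and "E x y \<Longrightarrow> y \<in> V"
    and "E x y \<Longrightarrow> E y x" and "\<not> E x x"
  using assms unfolding simple_graph_def by blast+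

definition is_path :: "('a \<Rightarrow> 'a \<Rightarrow> bool) \<Rightarrow> 'a list \<Rightarrow> bool" where
  "is_path E cs \<longleftrightarrow> distinct cs \<and> (\<forall>i. Suc i < length cs \<longrightarrow> E (cs ! i) (cs ! Suc i))"

lemma is_path_snoc:
  assumes "is_path E cs" "cs \<noteq> []" "l \<notin> set cs" "E (last cs) l"
  shows "is_path E (cs @ [l])"
  unfolding is_path_def
proof (intro conjI allI impI)
  show "distinct (cs @ [l])" using assms(1,3) by (simp add: is_path_def)
  fix i assume i: "Suc i < length (cs @ [l])"
  show "E ((cs @ [l]) ! i) ((cs @ [l]) ! Suc i)"
  proof (cases "Suc i < length cs")
    case True
    then show ?thesis using assms(1) by (simp add: is_path_def nth_append)
  next
    case False
    then have "i = length cs - 1" using i by simp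
    then show ?thesis using assms(2,4) by (simp add: nth_append last_conv_nth)
  qed
qed

lemma is_cycle_drop:
  assumes "is_path E cs" "k + 3 \<le> length cs" "E (last cs) (cs ! k)"
  shows "is_cycle E (drop k cs)"
  unfolding is_cycle_def
proof (intro conjI allI impI)
  show "3 \<le> length (drop k cs)" "distinct (drop k cs)"
    using assms(1,2) by (auto simp: is_path_def)
  fix i assume "Suc i < length (drop k cs)"
  then show "E (drop k cs ! i) (drop k cs ! Suc i)"
    using assms(1) by (auto simp: is_path_def)
next
  show "E (last (drop k cs)) (hd (drop k cs))"
    using assms(2,3) by (simp add: hd_drop_conv_nth)
qed

text \<open>The last vertex of a longest path in an acyclic graph has only its predecessor as neighbour.\<close>
lemma tree_has_leaf:
  assumes tree: "is_tree V E" and two: "2 \<le> card V"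
  obtains t p where "t \<in> V" "p \<in> V" "t \<noteq> p" "{l\<in>V. E t l} = {p}"
proof -
  have sg: "simple_graph V E" and conn: "connected_graph V E" and acyclic: "\<nexists>cs. is_cycle E cs"
    using tree by (auto simp: is_tree_def)
  define P where "P cs \<longleftrightarrow> is_path E cs \<and> set cs \<subseteq> V \<and> 2 \<le> length cs" for cs
  obtain x y where xy: "x \<in> V" "y \<in> V" "x \<noteq> y"
    using two by (metis card_le_Suc0_iff_eq not_less_eq_eq numeral_2_eq_2 simple_graphD(1)[OF sg])
  then obtain z where z: "E x z"
    using conn by (metis connected_graph_def converse_rtranclpE)
  have "P [x, z]"
    using z simple_graphD[OF sg] by (auto simp: P_def is_path_def less_Suc_eq)
  moreover have "length cs < Suc (card V)" if "P cs" for cs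
    using that simple_graphD(1)[OF sg]
    by (metis P_def card_mono distinct_card is_path_def le_imp_less_Suc)
  ultimately obtain cs where cs: "P cs" and longest: "\<And>ys. P ys \<Longrightarrow> length ys \<le> length cs"
    using Lattices_Big.ex_has_greatest_nat[of P "[x, z]" length "Suc (card V)"] by blast
  define n where "n = length cs"
  have n2: "2 \<le> n" and ne: "cs \<noteq> []" using cs by (auto simp: P_def n_def)
  define t where "t = last cs"
  define q where "q = cs ! (n - 2)"
  have qt: "E q t"
  proof -
    have "Suc (n - 2) < length cs" and "Suc (n - 2) = n - 1" using n2 by (auto simp: n_def)
    then show ?thesis using cs ne by (metis P_def is_path_def last_conv_nth n_def q_def t_def)
  qed
  have "l = q" if l: "l \<in> V" "E t l" for l
  proof (cases "l \<in> set cs")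
    case False
    then have "P (cs @ [l])" using cs ne l by (auto simp: P_def t_def intro: is_path_snoc)
    then show ?thesis using longest by fastforce
  next
    case True
    then obtain k where k: "k < n" "cs ! k = l" by (auto simp: in_set_conv_nth n_def)
    have "k \<noteq> n - 1" using k l simple_graphD(5)[OF sg] ne by (auto simp: t_def last_conv_nth n_def)
    moreover have "\<not> k + 3 \<le> n"
      using is_cycle_drop[of E cs k] acyclic cs k l by (auto simp: P_def t_def n_def)
    ultimately have "k = n - 2" using k(1) by linarith
    then show ?thesis using k(2) by (simp add: q_def)
  qed
  then have "{l\<in>V. E t l} = {q}"
    using qt simple_graphD[OF sg] by blast
  moreover have "t \<noteq> q" using qt simple_graphD(5)[OF sg] by auto
  ultimately show ?thesis using that qt simple_graphD[OF sg] by blast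
qed

definition delete_vertex :: "('a \<Rightarrow> 'a \<Rightarrow> bool) \<Rightarrow> 'a \<Rightarrow> 'a \<Rightarrow> 'a \<Rightarrow> bool" where
  "delete_vertex E t x y \<longleftrightarrow> E x y \<and> x \<noteq> t \<and> y \<noteq> t"

lemma simple_graph_delete_vertex:
  "simple_graph V E \<Longrightarrow> simple_graph (V - {t}) (delete_vertex E t)"
  by (auto simp: simple_graph_def delete_vertex_def)

lemma tree_delete_leaf:
  assumes tree: "is_tree V E" and p: "p \<in> V" "t \<noteq> p" and leaf: "{l\<in>V. E t l} = {p}"
  shows "is_tree (V - {t}) (delete_vertex E t)"
proof -
  have sg: "simple_graph V E" and conn: "connected_graph V E" and acyclic: "\<nexists>cs. is_cycle E cs"
    using tree by (auto simp: is_tree_def)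
  have from_t: "E t x \<longleftrightarrow> x = p" and to_t: "E x t \<longleftrightarrow> x = p" for x
    using leaf simple_graphD[OF sg] by blast+
  have walk: "(y \<noteq> t \<longrightarrow> (delete_vertex E t)\<^sup>*\<^sup>* x y) \<and> (y = t \<longrightarrow> (delete_vertex E t)\<^sup>*\<^sup>* x p)"
    if "E\<^sup>*\<^sup>* x y" "x \<noteq> t" for x y
    using that
  proof (induction rule: rtranclp_induct)
    case (step z y)
    show ?case
    proof (cases "z = t")
      case True
      then show ?thesis using step from_t by auto
    next
      case False
      then show ?thesis
        using step to_t simple_graphD(4)[OF sg]
        by (auto intro: rtranclp.rtrancl_into_rtrancl simp: delete_vertex_def)
    qed
  qed simp
  have "connected_graph (V - {t}) (delete_vertex E t)"
    using conn walk p by (auto simp: connected_graph_def)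
  moreover have "is_cycle (delete_vertex E t) cs \<Longrightarrow> is_cycle E cs" for cs
    by (auto simp: is_cycle_def delete_vertex_def)
  ultimately show ?thesis
    using simple_graph_delete_vertex[OF sg] acyclic by (auto simp: is_tree_def)
qed

lemma tree_leaf_induct [consumes 1, case_names singleton leaf]:
  assumes "is_tree V E"
    and singleton: "\<And>V E x. is_tree V E \<Longrightarrow> V = {x} \<Longrightarrow> P V E"
    and leaf: "\<And>V E t p. is_tree V E \<Longrightarrow> t \<in> V \<Longrightarrow> p \<in> V \<Longrightarrow> t \<noteq> p \<Longrightarrow>
      {l\<in>V. E t l} = {p} \<Longrightarrow> P (V - {t}) (delete_vertex E t) \<Longrightarrow> P V E"
  shows "P V E"
  using assms(1)
proof (induction "card V" arbitrary: V E rule: less_induct)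
  case less
  have "finite V" "V \<noteq> {}"
    using less.prems by (auto simp: is_tree_def simple_graph_def connected_graph_def)
  show ?case
  proof (cases "2 \<le> card V")
    case False
    then have "card V = 1"
      using \<open>finite V\<close> \<open>V \<noteq> {}\<close> card_0_eq by fastforce
    then obtain x where "V = {x}" by (auto simp: card_1_singleton_iff)
    then show ?thesis by (rule singleton[OF less.prems])
  next
    case True
    then obtain t p where t: "t \<in> V" and p: "p \<in> V" "t \<noteq> p" and nb: "{l\<in>V. E t l} = {p}"
      by (rule tree_has_leaf[OF less.prems])
    have "card (V - {t}) < card V"
      using \<open>finite V\<close> t by (rule card_Diff1_less)
    then have "P (V - {t}) (delete_vertex E t)"
      by (rule less.hyps[OF _ tree_delete_leaf[OF less.prems p nb]])
    then show ?thesis by (rule leaf[OF less.prems t p nb])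
  qed
qed

section \<open>Degrees\<close>

lemma neighbours_delete_vertex:
  assumes sg: "simple_graph V E" and "k \<noteq> t"
  shows "{l\<in>V. E k l} = {l\<in>V - {t}. delete_vertex E t k l} \<union> {l\<in>{t}. E k l}"
  using assms simple_graphD[OF sg] by (auto simp: delete_vertex_def)

lemma degree_delete_vertex:
  assumes sg: "simple_graph V E" and "k \<noteq> t"
  shows "degree V E k = degree (V - {t}) (delete_vertex E t) k + (if E k t then 1 else 0)"
proof -
  have "card {l\<in>V. E k l} = card {l\<in>V - {t}. delete_vertex E t k l} + card {l\<in>{t}. E k l}"
    unfolding neighbours_delete_vertex[OF assms] using simple_graphD(1)[OF sg]
    by (intro card_Un_disjoint) auto
  moreover have "{l\<in>{t}. E k l} = (if E k t then {t} else {})" by auto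
  ultimately show ?thesis by (simp add: degree_def)
qed

lemma degree_sum_delete_vertex:
  assumes sg: "simple_graph V E" and t: "t \<in> V"
  shows "(\<Sum>k\<in>V. degree V E k)
    = 2 * degree V E t + (\<Sum>k\<in>V - {t}. degree (V - {t}) (delete_vertex E t) k)"
proof -
  have fin: "finite V" using simple_graphD(1)[OF sg] .
  have "(\<Sum>k\<in>V - {t}. if E k t then 1 else 0) = card {k\<in>V - {t}. E k t}"
    using fin by (simp add: sum.inter_filter[symmetric])
  also have "{k\<in>V - {t}. E k t} = {k\<in>V. E t k}"
    using simple_graphD[OF sg] by blast
  finally have back_edges: "(\<Sum>k\<in>V - {t}. if E k t then 1 else 0) = degree V E t"
    by (simp add: degree_def)
  have "(\<Sum>k\<in>V. degree V E k) = degree V E t + (\<Sum>k\<in>V - {t}. degree V E k)"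
    using fin t by (simp add: sum.remove)
  also have "(\<Sum>k\<in>V - {t}. degree V E k)
      = (\<Sum>k\<in>V - {t}. degree (V - {t}) (delete_vertex E t) k) + degree V E t"
    unfolding back_edges[symmetric] sum.distrib[symmetric]
    using degree_delete_vertex[OF sg] by (intro sum.cong) auto
  finally show ?thesis by simp
qed

lemma tree_degree_sum:
  assumes "is_tree V E"
  shows "(\<Sum>k\<in>V. degree V E k) = 2 * (card V - 1)"
  using assms
proof (induction rule: tree_leaf_induct)
  case (singleton V E x)
  then show ?case by (simp add: degree_def is_tree_def simple_graph_def)
next
  case (leaf V E t p)
  have sg: "simple_graph V E" using leaf.hyps(1) by (simp add: is_tree_def)
  have fin: "finite V" using simple_graphD(1)[OF sg] .
  have "card V = Suc (card (V - {t}))" using fin leaf.hyps(2) by (rule card.remove)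
  moreover have "0 < card (V - {t})"
    using fin leaf.hyps(3,4) by (subst card_gt_0_iff) blast
  moreover have "degree V E t = 1" using leaf.hyps(5) by (simp add: degree_def)
  ultimately show ?case
    unfolding degree_sum_delete_vertex[OF sg leaf.hyps(2)] leaf.IH by linarith
qed

text \<open>Adjacent vertices of a tree have no common neighbour, else there would be a triangle.\<close>
lemma tree_adjacent_degree_sum_le:
  assumes tree: "is_tree V E" and edge: "E i j"
  shows "degree V E i + degree V E j \<le> card V"
proof -
  have sg: "simple_graph V E" and acyclic: "\<nexists>cs. is_cycle E cs"
    using tree by (auto simp: is_tree_def)
  have "{y\<in>V. E i y} \<inter> {y\<in>V. E j y} = {}"
  proof (rule ccontr)
    assume "\<not> ?thesis"
    then obtain w where "E i w" "E j w" by blast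
    then have "is_cycle E [i, j, w]"
      using edge simple_graphD[OF sg] by (auto simp: is_cycle_def less_Suc_eq)
    then show False using acyclic by blast
  qed
  then have "degree V E i + degree V E j = card ({y\<in>V. E i y} \<union> {y\<in>V. E j y})"
    using simple_graphD(1)[OF sg] by (simp add: degree_def card_Un_disjoint)
  also have "\<dots> \<le> card V" using simple_graphD(1)[OF sg] by (intro card_mono) auto
  finally show ?thesis .
qed

section \<open>Potentials and effective resistance\<close>

definition net_current :: "'a set \<Rightarrow> ('a \<Rightarrow> 'a \<Rightarrow> bool) \<Rightarrow> ('a \<Rightarrow> real) \<Rightarrow> 'a \<Rightarrow> real" where
  "net_current V E v k = (\<Sum>l\<in>{l\<in>V. E k l}. v k - v l)"

definition unit_current :: "'a \<Rightarrow> 'a \<Rightarrow> 'a \<Rightarrow> real" where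
  "unit_current i j k = (if k = i then 1 else 0) - (if k = j then 1 else 0)"

definition kirchhoff_potential :: "'a set \<Rightarrow> ('a \<Rightarrow> 'a \<Rightarrow> bool) \<Rightarrow> 'a \<Rightarrow> 'a \<Rightarrow> ('a \<Rightarrow> real) \<Rightarrow> bool"
  where "kirchhoff_potential V E i j v \<longleftrightarrow> (\<forall>k\<in>V. net_current V E v k = unit_current i j k)"

lemma net_current_diff:
  "net_current V E (\<lambda>k. v k - w k) k = net_current V E v k - net_current V E w k"
  by (simp add: net_current_def sum_subtractf[symmetric] algebra_simps)

lemma net_current_uminus: "net_current V E (\<lambda>k. - v k) k = - net_current V E v k"
  by (simp add: net_current_def sum_negf[symmetric])

lemma kirchhoff_potential_swap:
  "kirchhoff_potential V E i j v \<Longrightarrow> kirchhoff_potential V E j i (\<lambda>k. - v k)"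
  by (simp add: kirchhoff_potential_def net_current_uminus unit_current_def)

lemma kirchhoff_potential_zero: "kirchhoff_potential V E i i (\<lambda>_. 0)"
  by (simp add: kirchhoff_potential_def net_current_def unit_current_def)

text \<open>Maximum principle: a neighbour of a vertex where u attains its maximum has the same value.\<close>
lemma harmonic_imp_constant:
  assumes sg: "simple_graph V E" and conn: "connected_graph V E"
    and harmonic: "\<And>k. k \<in> V \<Longrightarrow> net_current V E u k = 0"
    and "x \<in> V" "y \<in> V"
  shows "u x = u y"
proof -
  have fin: "finite V" using simple_graphD(1)[OF sg] .
  have "Max (u ` V) \<in> u ` V" using fin \<open>x \<in> V\<close> by (intro Max_in) auto
  then obtain m where m: "m \<in> V" and "u m = Max (u ` V)" by (metis imageE)
  then have max: "u k \<le> u m" if "k \<in> V" for k using fin that by simp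
  have spread: "u l = u m" if "k \<in> V" "u k = u m" "E k l" for k l
  proof -
    have zero: "(\<Sum>l\<in>{l\<in>V. E k l}. u k - u l) = 0"
      using harmonic[OF \<open>k \<in> V\<close>] by (simp add: net_current_def)
    have nonneg: "0 \<le> u k - u w" if "w \<in> {l\<in>V. E k l}" for w
    proof -
      have "u w \<le> u m" using that by (simp add: max)
      then show ?thesis using \<open>u k = u m\<close> by simp
    qed
    have "finite {l\<in>V. E k l}" using fin by simp
    from sum_nonneg_eq_0_iff[where f = "\<lambda>w. u k - u w", OF this nonneg] zero have "u k - u l = 0"
      using \<open>E k l\<close> simple_graphD(3)[OF sg] by blast
    then show ?thesis using \<open>u k = u m\<close> by simp
  qed
  have reach: "z \<in> V \<and> u z = u m" if "E\<^sup>*\<^sup>* m z" for z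
    using that
  proof (induction rule: rtranclp_induct)
    case (step a b)
    then show ?case using spread[of a b] simple_graphD(3)[of V E a b, OF sg] by blast
  qed (use m in simp)
  have "E\<^sup>*\<^sup>* m x" "E\<^sup>*\<^sup>* m y"
    using conn m \<open>x \<in> V\<close> \<open>y \<in> V\<close> by (simp_all add: connected_graph_def)
  then show ?thesis using reach by metis
qed

lemma eff_resistance_eq:
  assumes sg: "simple_graph V E" and conn: "connected_graph V E"
    and v: "kirchhoff_potential V E i j v" and "i \<in> V" "j \<in> V"
  shows "eff_resistance V E i j = v i - v j"
proof -
  have "w i - w j = v i - v j" if w: "kirchhoff_potential V E i j w" for w
  proof -
    have "net_current V E (\<lambda>k. w k - v k) k = 0" if "k \<in> V" for k
      using v w that by (simp add: kirchhoff_potential_def net_current_diff)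
    from harmonic_imp_constant[OF sg conn this \<open>i \<in> V\<close> \<open>j \<in> V\<close>] show ?thesis by simp
  qed
  then have "(THE r. \<exists>w. kirchhoff_potential V E i j w \<and> r = w i - w j) = v i - v j"
    using v by (intro the_equality) blast+
  then show ?thesis
    unfolding eff_resistance_def kirchhoff_potential_def net_current_def unit_current_def .
qed

lemma net_current_extend_leaf:
  assumes sg: "simple_graph V E" and leaf: "{l\<in>V. E t l} = {p}" and "k \<in> V"
  shows "net_current V E (v(t := v p + c)) k
    = (if k = t then c else net_current (V - {t}) (delete_vertex E t) v k - (if k = p then c else 0))"
proof (cases "k = t")
  case True
  have "t \<noteq> p" using leaf simple_graphD(5)[OF sg] by blast
  then show ?thesis using True leaf by (simp add: net_current_def)
next
  case False
  have "E k t \<longleftrightarrow> k = p" using leaf simple_graphD[OF sg] \<open>k \<in> V\<close> by blast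
  then have to_t: "{l\<in>{t}. E k l} = (if k = p then {t} else {})" by auto
  have "net_current V E (v(t := v p + c)) k
      = (\<Sum>l\<in>{l\<in>V - {t}. delete_vertex E t k l}. v k - v l)
        + (\<Sum>l\<in>{l\<in>{t}. E k l}. v k - (v p + c))"
    unfolding net_current_def neighbours_delete_vertex[OF sg False]
    using False simple_graphD(1)[OF sg]
    by (subst sum.union_disjoint) (auto intro!: sum.cong simp: delete_vertex_def)
  also have "\<dots> = net_current (V - {t}) (delete_vertex E t) v k - (if k = p then c else 0)"
    unfolding to_t by (simp add: net_current_def)
  finally show ?thesis using False by simp
qed

lemma kirchhoff_potential_extend_leaf:
  assumes sg: "simple_graph V E" and leaf: "{l\<in>V. E t l} = {p}"
    and reduced: "\<And>k. k \<in> V - {t} \<Longrightarrow>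
      net_current (V - {t}) (delete_vertex E t) w k - (if k = p then c else 0) = unit_current i j k"
    and at_leaf: "c = unit_current i j t"
  shows "kirchhoff_potential V E i j (w(t := w p + c))"
  unfolding kirchhoff_potential_def
proof
  fix k assume k: "k \<in> V"
  show "net_current V E (w(t := w p + c)) k = unit_current i j k"
  proof (cases "k = t")
    case False
    then have "k \<in> V - {t}" using k by blast
    then show ?thesis using net_current_extend_leaf[OF sg leaf k] reduced False by simp
  qed (use net_current_extend_leaf[OF sg leaf k] at_leaf in simp)
qed

text \<open>In a connected graph this is \<open>min (dist i j) 2\<close> for the graph distance.\<close>
definition truncated_distance :: "('a \<Rightarrow> 'a \<Rightarrow> bool) \<Rightarrow> 'a \<Rightarrow> 'a \<Rightarrow> real" where
  "truncated_distance E i j = (if i = j then 0 else if E i j then 1 else 2)"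

lemma truncated_distance_commute:
  "(\<And>x y. E x y \<Longrightarrow> E y x) \<Longrightarrow> truncated_distance E i j = truncated_distance E j i"
  unfolding truncated_distance_def by (cases "E i j") auto

lemma tree_kirchhoff_potential_exists:
  assumes "is_tree V E" and "i \<in> V" "j \<in> V"
  shows "\<exists>v. kirchhoff_potential V E i j v \<and> truncated_distance E i j \<le> v i - v j"
  using assms
proof (induction arbitrary: i j rule: tree_leaf_induct)
  case (singleton V E x)
  then show ?case
    using kirchhoff_potential_zero by (fastforce simp: truncated_distance_def)
next
  case (leaf V E t p)
  let ?V = "V - {t}" and ?E = "delete_vertex E t"
  have sg: "simple_graph V E" using leaf.hyps(1) by (simp add: is_tree_def)
  note extend = kirchhoff_potential_extend_leaf[OF sg leaf.hyps(5)]
  txt \<open>The unit current entering at the leaf \<open>t\<close> passes through its edge to \<open>p\<close>, so a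
    potential for \<open>(p, j)\<close> on the smaller tree extends by raising \<open>t\<close> one unit above \<open>p\<close>.\<close>
  have from_leaf: "\<exists>v. kirchhoff_potential V E t j v \<and> truncated_distance E t j \<le> v t - v j"
    if "j \<in> V" for j
  proof (cases "j = t")
    case True
    then show ?thesis using kirchhoff_potential_zero by (fastforce simp: truncated_distance_def)
  next
    case False
    then obtain w where w: "kirchhoff_potential ?V ?E p j w"
      and w_ge: "truncated_distance ?E p j \<le> w p - w j"
      using leaf.IH[of p j] leaf.hyps(3,4) \<open>j \<in> V\<close> by blast
    have "kirchhoff_potential V E t j (w(t := w p + 1))"
      using w False by (intro extend) (auto simp: kirchhoff_potential_def unit_current_def)
    moreover have "truncated_distance E t j \<le> 1 + (w p - w j)"
    proof (cases "j = p")
      case False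
      then have "\<not> E t j" and "1 \<le> truncated_distance ?E p j"
        using leaf.hyps(5) \<open>j \<in> V\<close> by (auto simp: truncated_distance_def)
      then show ?thesis using w_ge by (simp add: truncated_distance_def)
    qed (use leaf.hyps(5) in \<open>auto simp: truncated_distance_def\<close>)
    ultimately show ?thesis using False by (intro exI[of _ "w(t := w p + 1)"]) simp
  qed
  consider "i = t" | "j = t" | "i \<noteq> t" "j \<noteq> t" by blast
  then show ?case
  proof cases
    case 1
    then show ?thesis using from_leaf leaf.prems by blast
  next
    case 2
    then obtain v where "kirchhoff_potential V E t i v" "truncated_distance E t i \<le> v t - v i"
      using from_leaf leaf.prems by blast
    moreover have "truncated_distance E i t = truncated_distance E t i"
      by (rule truncated_distance_commute) (rule simple_graphD(4)[OF sg])
    ultimately show ?thesis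
      using kirchhoff_potential_swap 2 by (intro exI[of _ "\<lambda>k. - v k"]) auto
  next
    case 3
    then obtain w where w: "kirchhoff_potential ?V ?E i j w"
      and w_ge: "truncated_distance ?E i j \<le> w i - w j"
      using leaf.IH leaf.prems by blast
    have "kirchhoff_potential V E i j (w(t := w p + 0))"
      using w 3 by (intro extend) (auto simp: kirchhoff_potential_def unit_current_def)
    then have "kirchhoff_potential V E i j (w(t := w p))" by simp
    moreover have "truncated_distance ?E i j = truncated_distance E i j"
      using 3 by (simp add: truncated_distance_def delete_vertex_def)
    then have "truncated_distance E i j \<le> (w(t := w p)) i - (w(t := w p)) j"
      using w_ge 3 by simp
    ultimately show ?thesis by blast
  qed
qed

lemma tree_eff_resistance_ge:
  assumes tree: "is_tree V E" and "i \<in> V" "j \<in> V"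
  shows "truncated_distance E i j \<le> eff_resistance V E i j"
proof -
  obtain v where v: "kirchhoff_potential V E i j v" "truncated_distance E i j \<le> v i - v j"
    using tree_kirchhoff_potential_exists[OF assms] by blast
  have "eff_resistance V E i j = v i - v j"
    using tree v(1) assms(2,3) by (intro eff_resistance_eq) (auto simp: is_tree_def)
  then show ?thesis using v(2) by simp
qed

section \<open>The additive degree-Kirchhoff index of a tree\<close>

lemma sum_ordered_pairs_symmetric:
  fixes g :: "'a::linorder \<Rightarrow> 'a \<Rightarrow> 'b::comm_semiring_1"
  assumes "finite V" and sym: "\<And>i j. g i j = g j i"
  shows "2 * (\<Sum>(i, j)\<in>{(i, j). i \<in> V \<and> j \<in> V \<and> i < j}. g i j) = (\<Sum>i\<in>V. \<Sum>j\<in>V - {i}. g i j)"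
proof -
  define D where "D = {(i, j). i \<in> V \<and> j \<in> V \<and> i < j}"
  have fin: "finite D" unfolding D_def by (rule finite_subset[of _ "V \<times> V"]) (use assms(1) in auto)
  have off_diagonal: "Sigma V (\<lambda>i. V - {i}) = D \<union> prod.swap ` D"
    unfolding D_def by (auto simp: neq_iff)
  have "(\<Sum>(i, j)\<in>prod.swap ` D. g i j) = (\<Sum>(i, j)\<in>D. g i j)"
    by (subst sum.reindex) (auto simp: comp_def sym intro!: sum.cong)
  moreover have "(\<Sum>i\<in>V. \<Sum>j\<in>V - {i}. g i j) = (\<Sum>(i, j)\<in>Sigma V (\<lambda>i. V - {i}). g i j)"
    using assms(1) by (subst sum.Sigma) auto
  moreover have "\<dots> = (\<Sum>(i, j)\<in>D. g i j) + (\<Sum>(i, j)\<in>prod.swap ` D. g i j)"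
    unfolding off_diagonal using fin by (intro sum.union_disjoint) (auto simp: D_def)
  ultimately show ?thesis unfolding D_def by (simp add: mult_2)
qed

lemma tree_degree_sum_real:
  assumes "is_tree V E"
  shows "(\<Sum>k\<in>V. real (degree V E k)) = 2 * (real (card V) - 1)"
proof -
  have "card V \<noteq> 0"
    using assms by (auto simp: is_tree_def simple_graph_def connected_graph_def)
  then show ?thesis
    using tree_degree_sum[OF assms] by (simp flip: of_nat_sum add: of_nat_diff)
qed

text \<open>For \<open>j \<noteq> i\<close> the weight is 2 minus the indicator of an edge; on edges
  \<open>d_i + d_j \<le> N\<close>.\<close>
lemma tree_weighted_degree_sum_at_vertex_ge:
  assumes tree: "is_tree V E" and i: "i \<in> V"
  defines "N \<equiv> real (card V)" and "d \<equiv> \<lambda>k. real (degree V E k)"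
  shows "(N - 4) * d i + 4 * (N - 1) \<le> (\<Sum>j\<in>V - {i}. (d i + d j) * truncated_distance E i j)"
proof -
  have sg: "simple_graph V E" using tree by (simp add: is_tree_def)
  have fin: "finite V" using simple_graphD(1)[OF sg] .
  have nbrs: "{j\<in>V - {i}. E i j} = {j\<in>V. E i j}" using simple_graphD(5)[OF sg] by blast
  have "1 \<le> card V" using fin i by (metis card_0_eq empty_iff less_one not_le)
  then have "(\<Sum>j\<in>V - {i}. d i) = (N - 1) * d i"
    using fin i by (simp add: N_def card_Diff_singleton of_nat_diff)
  moreover have "(\<Sum>j\<in>V - {i}. d j) = 2 * (N - 1) - d i"
    using tree_degree_sum_real[OF tree] fin i by (simp add: sum_diff1 N_def d_def)
  ultimately have all: "(\<Sum>j\<in>V - {i}. d i + d j) = (N - 2) * d i + 2 * (N - 1)"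
    by (simp add: sum.distrib algebra_simps)
  have "(\<Sum>j\<in>V - {i}. if E i j then d i + d j else 0) = (\<Sum>j\<in>{j\<in>V - {i}. E i j}. d i + d j)"
    using fin by (simp only: sum.inter_filter finite_Diff)
  also have "\<dots> \<le> (\<Sum>j\<in>{j\<in>V. E i j}. N)"
    unfolding nbrs
  proof (rule sum_mono)
    fix j assume "j \<in> {j\<in>V. E i j}"
    then have "degree V E i + degree V E j \<le> card V"
      using tree_adjacent_degree_sum_le[OF tree] by blast
    then show "d i + d j \<le> N" unfolding d_def N_def by linarith
  qed
  also have "\<dots> = N * d i" by (simp add: d_def degree_def)
  finally have edges: "(\<Sum>j\<in>V - {i}. if E i j then d i + d j else 0) \<le> N * d i" .
  have "(\<Sum>j\<in>V - {i}. (d i + d j) * truncated_distance E i j)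
      = (\<Sum>j\<in>V - {i}. 2 * (d i + d j) - (if E i j then d i + d j else 0))"
    by (rule sum.cong) (auto simp: truncated_distance_def)
  also have "\<dots> = 2 * (\<Sum>j\<in>V - {i}. d i + d j) - (\<Sum>j\<in>V - {i}. if E i j then d i + d j else 0)"
    by (simp add: sum_subtractf sum_distrib_left)
  finally show ?thesis unfolding all using edges by (simp add: algebra_simps)
qed

text \<open>Equality holds for the star, so this is the sharp lower bound for trees.\<close>
lemma tree_additive_degree_kirchhoff_ge:
  assumes tree: "is_tree V E"
  defines "N \<equiv> real (card V)"
  shows "(3 * N - 4) * (N - 1) \<le> additive_degree_kirchhoff V E"
proof -
  have sg: "simple_graph V E" using tree by (simp add: is_tree_def)
  define g where "g i j = real (degree V E i + degree V E j) * truncated_distance E i j" for i j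
  have "(\<Sum>i\<in>V. (N - 4) * degree V E i + 4 * (N - 1))
      = (N - 4) * (\<Sum>i\<in>V. real (degree V E i)) + N * (4 * (N - 1))"
    by (simp add: sum.distrib sum_distrib_left N_def)
  then have "2 * ((3 * N - 4) * (N - 1)) = (\<Sum>i\<in>V. (N - 4) * degree V E i + 4 * (N - 1))"
    unfolding tree_degree_sum_real[OF tree] N_def by (simp add: algebra_simps)
  also have "\<dots> \<le> (\<Sum>i\<in>V. \<Sum>j\<in>V - {i}. g i j)"
    using tree_weighted_degree_sum_at_vertex_ge[OF tree] by (intro sum_mono) (simp add: g_def N_def)
  also have "\<dots> = 2 * (\<Sum>(i, j)\<in>{(i, j). i \<in> V \<and> j \<in> V \<and> i < j}. g i j)"
    using simple_graphD[OF sg] truncated_distance_commute[of E]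
    by (intro sum_ordered_pairs_symmetric[symmetric]) (auto simp: g_def add.commute)
  also have "\<dots> \<le> 2 * additive_degree_kirchhoff V E"
    unfolding additive_degree_kirchhoff_def g_def
    using tree_eff_resistance_ge[OF tree] by (auto intro!: sum_mono mult_left_mono)
  finally show ?thesis by simp
qed

lemma card_leaves_less:
  assumes tree: "is_tree V E" and "2 < card V"
  shows "card (leaves V E) < card V"
proof (rule ccontr)
  assume "\<not> ?thesis"
  moreover have "finite V" "leaves V E \<subseteq> V"
    using tree by (auto simp: is_tree_def simple_graph_def leaves_def)
  ultimately have "leaves V E = V" by (meson card_seteq not_less)
  then have "\<forall>k\<in>V. degree V E k = 1" unfolding leaves_def by blast
  then have "(\<Sum>k\<in>V. degree V E k) = card V" by simp
  then show False using tree_degree_sum[OF tree] assms(2) by simp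
qed

text \<open>With \<open>t = 2(N - 1) - M \<ge> N - 1\<close> the bracket equals \<open>2 + (N - 2)\<^sup>2 / t\<close>.\<close>
lemma leaf_bound_le_star_bound:
  fixes N M :: real
  assumes "2 \<le> N" and "M \<le> N - 1"
  shows "N * (N - 2) + 2 * (N - 1) * (M + (N - M)^2 / (2 * (N - 1) - M)) - 2 * (N - 1)
     \<le> (3 * N - 4) * (N - 1)"
proof -
  define t where "t = 2 * (N - 1) - M"
  have t: "N - 1 \<le> t" "0 < t" using assms unfolding t_def by simp_all
  define y where "y = (N - 2)^2 / t"
  have bracket: "M + (N - M)^2 / t = 2 + y"
    using t(2) unfolding t_def y_def by (simp add: field_simps power2_eq_square)
  have "(N - 1) * y \<le> (N - 1) * ((N - 2)^2 / (N - 1))"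
    using t assms(1) unfolding y_def by (intro mult_left_mono divide_left_mono) auto
  also have "\<dots> = (N - 2)^2" using assms(1) by simp
  finally have "(N - 1) * y \<le> (N - 2)^2" .
  moreover have "N * (N - 2) + 2 * (N - 1) * (2 + y) - 2 * (N - 1)
      = N * (N - 2) + 2 * (N - 1) + 2 * ((N - 1) * y)"
    by (simp add: algebra_simps)
  ultimately show ?thesis
    unfolding t_def[symmetric] bracket using assms(1)
    by (simp add: algebra_simps power2_eq_square)
qed

theorem corollary4:
  fixes V :: "'a::linorder set" and E :: "'a \<Rightarrow> 'a \<Rightarrow> bool"
  assumes "is_tree V E"
    and "card V > 2"
    and "card (leaves V E) \<ge> 2"
  shows "let N = real (card V); M = real (card (leaves V E)) in
     N * (N - 2) + 2 * (N - 1) * (M + (N - M)^2 / (2 * (N - 1) - M)) - 2 * (N - 1)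
       \<le> additive_degree_kirchhoff V E"
proof -
  define N where "N = real (card V)"
  define M where "M = real (card (leaves V E))"
  have "M \<le> N - 1"
    using card_leaves_less[OF assms(1,2)] unfolding M_def N_def by linarith
  then have "N * (N - 2) + 2 * (N - 1) * (M + (N - M)^2 / (2 * (N - 1) - M)) - 2 * (N - 1)
      \<le> (3 * N - 4) * (N - 1)"
    using assms(2) unfolding N_def by (intro leaf_bound_le_star_bound) auto
  also have "\<dots> \<le> additive_degree_kirchhoff V E"
    unfolding N_def by (rule tree_additive_degree_kirchhoff_ge[OF assms(1)])
  finally show ?thesis unfolding Let_def N_def M_def .
qed

end
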